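(* Let $\mathscr{A}$ be a quiver over $\Lambda$ and $R$ a set of relations on paths in $\mathscr{A}$, and $\mathscr{C}=\langle\mathscr{A}\mid R\rangle^+$. Assume: (i) every relation in $R$ has the form $a|v\sim b|w$ with $a,b,v,w\in\mathscr{A}$, and every path of length $2$ appears in at most one relation; (ii) for all $a\neq b$ in $\mathscr{A}$ with $\mathfrak{s}(a)=\mathfrak{s}(b)$ there is a unique relation in $R$ of the form $a|v\sim b|w$; (ii') for all $a\neq b$ in $\mathscr{A}$ with $\mathfrak{t}(a)=\mathfrak{t}(b)$ there is a unique relation in $R$ of the form $v|a\sim w|b$; (iii) for every $a\in\mathscr{A}$ there is a unique $z_a\in\mathscr{A}(\mathfrak{t}(a),\Lambda)$ such that: (a) for every $v\in\mathscr{A}(\mathfrak{t}(a),\Lambda)\setminus\{z_a\}$ there are $b\in\mathscr{A}(\mathfrak{s}(a),\Lambda)\setminus\{a\}$ and $w\in\mathscr{A}$ with $(a|v\sim b|w)\in R$; (b) if $(a|z_a\sim b|w)\in R$ then $b=a$ and $w=z_a$; (iii') for every $a\in\mathscr{A}$ there is a unique $z^a\in\mathscr{A}(\Lambda,\mathfrak{s}(a))$ such that: (a) for every $v\in\mathscr{A}(\Lambda,\mathfrak{s}(a))\setminus\{z^a\}$ there are $b\in\mathscr{A}(\Lambda,\mathfrak{t}(a))\setminus\{a\}$ and $w\in\mathscr{A}$ with $(v|a\sim w|b)\in R$; (b) if $(z^a|a\sim w|b)\in R$ then $b=a$ and $w=z^a$; (v) writing, for $a\neq b$ with $\mathfrak{s}(a)=\mathfrak{s}(b)$,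 $a\star b$ for the unique $v$ such that $(a|v\sim b|w)\in R$ for some $w$, one has $(a\star b)\star(a\star c)=(b\star a)\star(b\star c)$ for all pairwise distinct $a,b,c\in\mathscr{A}$ with a common source. Define $a\star' b:=a\star b$ if $a\neq b$ and $a\star' a:=z_a$ (for $\mathfrak{s}(a)=\mathfrak{s}(b)$); then each $a\star'\cdot\colon\mathscr{A}(\mathfrak{s}(a),\Lambda)\to\mathscr{A}(\mathfrak{t}(a),\Lambda)$ is a bijection. Define, for composable $a|b$, $a\rightharpoonup b:=c$ where $c$ is the unique element with $b=a\star' c$, and $a\leftharpoonup b:=(a\rightharpoonup b)\star' a$. Then $\sigma\colon\mathscr{A}\otimes\mathscr{A}\to\mathscr{A}\otimes\mathscr{A}$, $\sigma(a|b)=(a\rightharpoonup b)|(a\leftharpoonup b)$, is an involutive non-degenerate quiver-theoretic Yang--Baxter map on $\mathscr{A}$ whose structure category is $\mathscr{C}$.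
   Context: A quiver over $\Lambda$ has source/target maps $\mathfrak{s},\mathfrak{t}$; $\mathscr{A}(\lambda,\Lambda)$ (resp. $\mathscr{A}(\Lambda,\mu)$) denotes arrows with source $\lambda$ (resp. target $\mu$). $\langle\mathscr{A}\mid R\rangle^+$ is the category presented by generators $\mathscr{A}$ and relations $R$: the path category of $\mathscr{A}$ (paths $x_1|\dots|x_n$ with $\mathfrak{t}(x_i)=\mathfrak{s}(x_{i+1})$, composed by concatenation) modulo the congruence generated by $R$. A relation $u\sim v$ is regarded as the same as $v\sim u$. $\mathscr{A}\otimes\mathscr{A}$ is the quiver of composable pairs $a|b$. A quiver-theoretic Yang--Baxter map is a source/target-preserving map $\sigma$ on $\mathscr{A}\otimes\mathscr{A}$ with $(\sigma\otimes\mathrm{id})(\mathrm{id}\otimes\sigma)(\sigma\otimes\mathrm{id})=(\mathrm{id}\otimes\sigma)(\sigma\otimes\mathrm{id})(\mathrm{id}\otimes\sigma)$; involutive: $\sigma^2=\mathrm{id}$; non-degenerate: all maps $x\rightharpoonup\cdot\colon\mathscr{A}(\mathfrak{t}(x),\Lambda)\to\mathscr{A}(\mathfrak{s}(x),\Lambda)$ and $\cdot\leftharpoonup y\colon\mathscr{A}(\Lambda,\mathfrak{s}(y))\to\mathscr{A}(\Lambda,\mathfrak{t}(y))$ are bijective. Its structure category is the category presented by generators $\mathscr{A}$ and relations $x|y\sim(x\rightharpoonup y)|(x\leftharpoonup y)$. *)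

theory Defs
  imports Main
begin

text \<open>Paths are lists of arrows
  x1|...|xn with t xi = s x(i+1); the empty list stands for identity paths.
  A set of relations R is a set of pairs (u,v) of paths, read as u ~ v;
  u ~ v is identified with v ~ u.\<close>

definition is_path :: "'a set \<Rightarrow> ('a \<Rightarrow> 'v) \<Rightarrow> ('a \<Rightarrow> 'v) \<Rightarrow> 'a list \<Rightarrow> bool" where
  "is_path A s t p \<longleftrightarrow> set p \<subseteq> A \<and> (\<forall>i. Suc i < length p \<longrightarrow> t (p ! i) = s (p ! Suc i))"

definition relations_on_paths ::
  "'a set \<Rightarrow> ('a \<Rightarrow> 'v) \<Rightarrow> ('a \<Rightarrow> 'v) \<Rightarrow> ('a list \<times> 'a list) set \<Rightarrow> bool" where
  "relations_on_paths A s t R \<longleftrightarrow>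
     (\<forall>(p, q) \<in> R. is_path A s t p \<and> is_path A s t q \<and> p \<noteq> [] \<and> q \<noteq> [] \<and>
        s (hd p) = s (hd q) \<and> t (last p) = t (last q))"

definition rel :: "('a list \<times> 'a list) set \<Rightarrow> 'a list \<Rightarrow> 'a list \<Rightarrow> bool" where
  "rel R u v \<longleftrightarrow> (u, v) \<in> R \<or> (v, u) \<in> R"

text \<open>The presented category \<langle>A | R\<rangle>^+ is the path category modulo this congruence.\<close>
inductive pcong :: "'a set \<Rightarrow> ('a \<Rightarrow> 'v) \<Rightarrow> ('a \<Rightarrow> 'v) \<Rightarrow> ('a list \<times> 'a list) set
    \<Rightarrow> 'a list \<Rightarrow> 'a list \<Rightarrow> bool"
  for A s t R where
  base: "(p, q) \<in> R \<Longrightarrow> pcong A s t R p q"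
| refl: "is_path A s t p \<Longrightarrow> pcong A s t R p p"
| sym: "pcong A s t R p q \<Longrightarrow> pcong A s t R q p"
| trans: "pcong A s t R p q \<Longrightarrow> pcong A s t R q r \<Longrightarrow> pcong A s t R p r"
| ctxt: "pcong A s t R p q \<Longrightarrow> is_path A s t (u @ p @ v) \<Longrightarrow> is_path A s t (u @ q @ v)
         \<Longrightarrow> pcong A s t R (u @ p @ v) (u @ q @ v)"

definition star :: "('a list \<times> 'a list) set \<Rightarrow> 'a \<Rightarrow> 'a \<Rightarrow> 'a" where
  "star R a b = fst (THE vw. rel R [a, fst vw] [b, snd vw])"

definition zpred :: "'a set \<Rightarrow> ('a \<Rightarrow> 'v) \<Rightarrow> ('a \<Rightarrow> 'v) \<Rightarrow> ('a list \<times> 'a list) set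
    \<Rightarrow> 'a \<Rightarrow> 'a \<Rightarrow> bool" where
  "zpred A s t R a z \<longleftrightarrow> z \<in> A \<and> s z = t a \<and>
     (\<forall>v \<in> A. s v = t a \<and> v \<noteq> z \<longrightarrow>
        (\<exists>b \<in> A. s b = s a \<and> b \<noteq> a \<and> (\<exists>w \<in> A. rel R [a, v] [b, w]))) \<and>
     (\<forall>b w. rel R [a, z] [b, w] \<longrightarrow> b = a \<and> w = z)"

definition zpred' :: "'a set \<Rightarrow> ('a \<Rightarrow> 'v) \<Rightarrow> ('a \<Rightarrow> 'v) \<Rightarrow> ('a list \<times> 'a list) set
    \<Rightarrow> 'a \<Rightarrow> 'a \<Rightarrow> bool" where
  "zpred' A s t R a z \<longleftrightarrow> z \<in> A \<and> t z = s a \<and>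
     (\<forall>v \<in> A. t v = s a \<and> v \<noteq> z \<longrightarrow>
        (\<exists>b \<in> A. t b = t a \<and> b \<noteq> a \<and> (\<exists>w \<in> A. rel R [v, a] [w, b]))) \<and>
     (\<forall>b w. rel R [z, a] [w, b] \<longrightarrow> b = a \<and> w = z)"

definition zeta :: "'a set \<Rightarrow> ('a \<Rightarrow> 'v) \<Rightarrow> ('a \<Rightarrow> 'v) \<Rightarrow> ('a list \<times> 'a list) set \<Rightarrow> 'a \<Rightarrow> 'a" where
  "zeta A s t R a = (THE z. zpred A s t R a z)"

definition star' :: "'a set \<Rightarrow> ('a \<Rightarrow> 'v) \<Rightarrow> ('a \<Rightarrow> 'v) \<Rightarrow> ('a list \<times> 'a list) set \<Rightarrow> 'a \<Rightarrow> 'a \<Rightarrow> 'a" where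
  "star' A s t R a b = (if a = b then zeta A s t R a else star R a b)"

definition out_arrows :: "'a set \<Rightarrow> ('a \<Rightarrow> 'v) \<Rightarrow> 'v \<Rightarrow> 'a set" where
  "out_arrows A s x = {a \<in> A. s a = x}"

definition in_arrows :: "'a set \<Rightarrow> ('a \<Rightarrow> 'v) \<Rightarrow> 'v \<Rightarrow> 'a set" where
  "in_arrows A t x = {a \<in> A. t a = x}"

definition rharp :: "'a set \<Rightarrow> ('a \<Rightarrow> 'v) \<Rightarrow> ('a \<Rightarrow> 'v) \<Rightarrow> ('a list \<times> 'a list) set \<Rightarrow> 'a \<Rightarrow> 'a \<Rightarrow> 'a" where
  "rharp A s t R a b = (THE c. c \<in> out_arrows A s (s a) \<and> b = star' A s t R a c)"

definition lharp :: "'a set \<Rightarrow> ('a \<Rightarrow> 'v) \<Rightarrow> ('a \<Rightarrow> 'v) \<Rightarrow> ('a list \<times> 'a list) set \<Rightarrow> 'a \<Rightarrow> 'a \<Rightarrow> 'a" where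
  "lharp A s t R a b = star' A s t R (rharp A s t R a b) a"

definition sigma :: "'a set \<Rightarrow> ('a \<Rightarrow> 'v) \<Rightarrow> ('a \<Rightarrow> 'v) \<Rightarrow> ('a list \<times> 'a list) set \<Rightarrow> 'a \<times> 'a \<Rightarrow> 'a \<times> 'a" where
  "sigma A s t R p = (rharp A s t R (fst p) (snd p), lharp A s t R (fst p) (snd p))"

definition composable :: "'a set \<Rightarrow> ('a \<Rightarrow> 'v) \<Rightarrow> ('a \<Rightarrow> 'v) \<Rightarrow> 'a \<times> 'a \<Rightarrow> bool" where
  "composable A s t p \<longleftrightarrow> fst p \<in> A \<and> snd p \<in> A \<and> t (fst p) = s (snd p)"

definition sig12 :: "('a \<times> 'a \<Rightarrow> 'a \<times> 'a) \<Rightarrow> 'a \<times> 'a \<times> 'a \<Rightarrow> 'a \<times> 'a \<times> 'a" where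
  "sig12 \<sigma> x = (fst (\<sigma> (fst x, fst (snd x))), snd (\<sigma> (fst x, fst (snd x))), snd (snd x))"

definition sig23 :: "('a \<times> 'a \<Rightarrow> 'a \<times> 'a) \<Rightarrow> 'a \<times> 'a \<times> 'a \<Rightarrow> 'a \<times> 'a \<times> 'a" where
  "sig23 \<sigma> x = (fst x, fst (\<sigma> (snd x)), snd (\<sigma> (snd x)))"

definition qyb_map :: "'a set \<Rightarrow> ('a \<Rightarrow> 'v) \<Rightarrow> ('a \<Rightarrow> 'v) \<Rightarrow> ('a \<times> 'a \<Rightarrow> 'a \<times> 'a) \<Rightarrow> bool" where
  "qyb_map A s t \<sigma> \<longleftrightarrow>
     (\<forall>p. composable A s t p \<longrightarrow> composable A s t (\<sigma> p) \<and>
          s (fst (\<sigma> p)) = s (fst p) \<and> t (snd (\<sigma> p)) = t (snd p)) \<and>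
     (\<forall>x y z. x \<in> A \<longrightarrow> y \<in> A \<longrightarrow> z \<in> A \<longrightarrow> t x = s y \<longrightarrow> t y = s z \<longrightarrow>
          sig12 \<sigma> (sig23 \<sigma> (sig12 \<sigma> (x, y, z))) = sig23 \<sigma> (sig12 \<sigma> (sig23 \<sigma> (x, y, z))))"

definition involutive_on :: "'a set \<Rightarrow> ('a \<Rightarrow> 'v) \<Rightarrow> ('a \<Rightarrow> 'v) \<Rightarrow> ('a \<times> 'a \<Rightarrow> 'a \<times> 'a) \<Rightarrow> bool" where
  "involutive_on A s t \<sigma> \<longleftrightarrow> (\<forall>p. composable A s t p \<longrightarrow> \<sigma> (\<sigma> p) = p)"

definition nondegenerate :: "'a set \<Rightarrow> ('a \<Rightarrow> 'v) \<Rightarrow> ('a \<Rightarrow> 'v) \<Rightarrow> ('a \<times> 'a \<Rightarrow> 'a \<times> 'a) \<Rightarrow> bool" where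
  "nondegenerate A s t \<sigma> \<longleftrightarrow>
     (\<forall>x \<in> A. bij_betw (\<lambda>y. fst (\<sigma> (x, y))) (out_arrows A s (t x)) (out_arrows A s (s x))) \<and>
     (\<forall>y \<in> A. bij_betw (\<lambda>x. snd (\<sigma> (x, y))) (in_arrows A t (s y)) (in_arrows A t (t y)))"

definition structure_rels :: "'a set \<Rightarrow> ('a \<Rightarrow> 'v) \<Rightarrow> ('a \<Rightarrow> 'v) \<Rightarrow> ('a \<times> 'a \<Rightarrow> 'a \<times> 'a)
    \<Rightarrow> ('a list \<times> 'a list) set" where
  "structure_rels A s t \<sigma> =
     {([x, y], [fst (\<sigma> (x, y)), snd (\<sigma> (x, y))]) | x y. composable A s t (x, y)}"

end

theory Submission
  imports Defs
begin

text \<open>By (ii) and (iii), \<open>a \<star>' _\<close> maps the arrows leaving \<open>s a\<close> bijectively onto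
  those leaving \<open>t a\<close>. Hence every composable pair is uniquely of the form \<open>a|(a \<star>' c)\<close>,
  and \<open>\<sigma>(a|(a \<star>' c)) = c|(c \<star>' a)\<close>, which makes \<open>\<sigma>\<close> involutive. For \<open>c \<noteq> a\<close> this is
  the relation \<open>a|(a \<star> c) \<sim> c|(c \<star> a)\<close> of \<open>R\<close>, and for \<open>c = a\<close> it is the identity on
  \<open>a|z\<^sub>a\<close>, so both sets of relations generate the same congruence.

  Parametrising composable triples as \<open>x|(x \<star>' c)|((x \<star>' c) \<star>' (x \<star>' e))\<close>, \<open>\<sigma>\<close> acting
  on the last two factors swaps \<open>c\<close> and \<open>e\<close>, and \<open>\<sigma>\<close> acting on the first two swaps \<open>x\<close>
  and \<open>c\<close> as soon as \<open>\<star>'\<close> satisfies the cycle law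
  \<open>(a \<star>' b) \<star>' (a \<star>' c) = (b \<star>' a) \<star>' (b \<star>' c)\<close>. The braid relation is then the one of
  the symmetric group on three letters. The cycle law is (v) when \<open>a, b, c\<close> are distinct;
  the degenerate cases need (iii'), through the fact that \<open>a \<mapsto> z\<^sub>a\<close> and \<open>a \<mapsto> z\<^sup>a\<close> are
  mutually inverse. Condition (ii') gives right non-degeneracy.\<close>

lemma rel_commute: "rel R p q \<longleftrightarrow> rel R q p"
  unfolding rel_def by auto

lemma pcong_mono:
  assumes "pcong A s t X p q" and "\<And>p q. (p, q) \<in> X \<Longrightarrow> pcong A s t Y p q"
  shows "pcong A s t Y p q"
  using assms(1) by induction (auto intro: assms(2) pcong.intros)

locale left_complemented_presentation =
  fixes A :: "'a set" and s t :: "'a \<Rightarrow> 'v" and R :: "('a list \<times> 'a list) set"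
  assumes R_paths: "relations_on_paths A s t R"
    and i_form: "\<forall>(p, q) \<in> R. \<exists>a v b w. a \<in> A \<and> v \<in> A \<and> b \<in> A \<and> w \<in> A \<and> p = [a, v] \<and> q = [b, w]"
    and i_unique: "\<forall>p r1 r2. r1 \<in> R \<longrightarrow> r2 \<in> R \<longrightarrow> p \<in> {fst r1, snd r1} \<longrightarrow> p \<in> {fst r2, snd r2}
                     \<longrightarrow> r1 = r2 \<or> r1 = prod.swap r2"
    and ii: "\<forall>a \<in> A. \<forall>b \<in> A. a \<noteq> b \<and> s a = s b \<longrightarrow> (\<exists>!vw. rel R [a, fst vw] [b, snd vw])"
    and iii: "\<forall>a \<in> A. \<exists>!z. zpred A s t R a z"
begin

abbreviation star_R (infixl "\<star>" 70) where "a \<star> b \<equiv> star R a b"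
abbreviation star'_R (infixl "\<star>''" 70) where "a \<star>' b \<equiv> star' A s t R a b"
abbreviation \<zeta> where "\<zeta> \<equiv> zeta A s t R"
abbreviation \<sigma> where "\<sigma> \<equiv> sigma A s t R"

lemma R_memE:
  assumes "(p, q) \<in> R"
  obtains a v b w where "p = [a, v]" "q = [b, w]" "a \<in> A" "v \<in> A" "b \<in> A" "w \<in> A"
    "t a = s v" "t b = s w" "s a = s b" "t v = t w"
proof -
  obtain a v b w where *: "a \<in> A" "v \<in> A" "b \<in> A" "w \<in> A" "p = [a, v]" "q = [b, w]"
    using i_form assms by fastforce
  have "is_path A s t p" "is_path A s t q" "s (hd p) = s (hd q)" "t (last p) = t (last q)"
    using R_paths assms unfolding relations_on_paths_def by auto
  with * have "t a = s v" "t b = s w" "s a = s b" "t v = t w"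
    unfolding is_path_def by (auto dest!: spec[of _ 0])
  with * show thesis using that by blast
qed

lemma relD:
  assumes "rel R [a, v] [b, w]"
  shows "a \<in> A" "v \<in> A" "b \<in> A" "w \<in> A" "t a = s v" "t b = s w" "s a = s b" "t v = t w"
  using assms unfolding rel_def by (auto elim: R_memE)

lemma rel_unique:
  assumes "rel R p q" and "rel R p q'"
  shows "q = q'"
proof -
  obtain r1 where r1: "r1 \<in> R" "r1 = (p, q) \<or> r1 = (q, p)"
    using assms(1) unfolding rel_def by auto
  obtain r2 where r2: "r2 \<in> R" "r2 = (p, q') \<or> r2 = (q', p)"
    using assms(2) unfolding rel_def by auto
  have "r1 = r2 \<or> r1 = prod.swap r2"
    using i_unique[rule_format, of r1 r2 p] r1 r2 by auto
  with r1 r2 show ?thesis by auto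
qed

lemma zpred_zeta: "a \<in> A \<Longrightarrow> zpred A s t R a (\<zeta> a)"
  unfolding zeta_def using iii by (blast intro: theI')

lemma zeta_in: "a \<in> A \<Longrightarrow> \<zeta> a \<in> A \<and> s (\<zeta> a) = t a"
  using zpred_zeta unfolding zpred_def by blast

lemma rel_zeta_trivial: "a \<in> A \<Longrightarrow> rel R [a, \<zeta> a] [b, w] \<Longrightarrow> b = a \<and> w = \<zeta> a"
  using zpred_zeta unfolding zpred_def by blast

lemma rel_if_ne_zeta:
  assumes "a \<in> A" "v \<in> A" "s v = t a" "v \<noteq> \<zeta> a"
  obtains b w where "b \<noteq> a" "rel R [a, v] [b, w]"
  using zpred_zeta[of a] assms that unfolding zpred_def by blast

lemma rel_same_head:
  assumes "rel R [a, v] [a, w]"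
  shows "v = w"
proof (cases "v = \<zeta> a")
  case True
  then show ?thesis using rel_zeta_trivial relD(1) assms by blast
next
  case False
  then obtain b w' where "b \<noteq> a" "rel R [a, v] [b, w']"
    using rel_if_ne_zeta relD[OF assms] by metis
  then show ?thesis using rel_unique[OF assms] by blast
qed

lemma star_rel:
  assumes "a \<in> A" "b \<in> A" "a \<noteq> b" "s a = s b"
  shows "rel R [a, a \<star> b] [b, b \<star> a]"
proof -
  have u1: "\<exists>!vw. rel R [a, fst vw] [b, snd vw]" and u2: "\<exists>!vw. rel R [b, fst vw] [a, snd vw]"
    using ii assms by auto
  define p where "p = (THE vw. rel R [a, fst vw] [b, snd vw])"
  have p: "rel R [a, fst p] [b, snd p]"
    using theI'[OF u1] p_def by simp
  have "(THE vw. rel R [b, fst vw] [a, snd vw]) = (snd p, fst p)"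
    using p u2 by (intro the1_equality) (auto simp: rel_commute)
  then show ?thesis
    using p unfolding star_def p_def by simp
qed

lemma rel_imp_star:
  assumes "rel R [a, v] [b, w]" and "a \<noteq> b"
  shows "v = a \<star> b" "w = b \<star> a"
proof -
  have "a \<in> A" "b \<in> A" "s a = s b"
    using relD[OF assms(1)] by auto
  then have "\<exists>!vw. rel R [a, fst vw] [b, snd vw]" "rel R [a, a \<star> b] [b, b \<star> a]"
    using ii star_rel assms(2) by auto
  then have "(v, w) = (a \<star> b, b \<star> a)"
    using assms(1) by (metis fst_conv snd_conv)
  then show "v = a \<star> b" "w = b \<star> a" by simp_all
qed

lemma star_in:
  assumes "a \<in> A" "b \<in> A" "a \<noteq> b" "s a = s b"
  shows "a \<star> b \<in> A \<and> s (a \<star> b) = t a"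
  using relD[OF star_rel[OF assms]] by auto

lemma star_ne_zeta:
  assumes "a \<in> A" "b \<in> A" "a \<noteq> b" "s a = s b"
  shows "a \<star> b \<noteq> \<zeta> a"
  using rel_zeta_trivial[OF assms(1)] star_rel[OF assms] assms(3) by metis

lemma star_inj:
  assumes "a \<in> A" "b \<in> A" "c \<in> A" "a \<noteq> b" "a \<noteq> c" "s a = s b" "s a = s c"
    and "a \<star> b = a \<star> c"
  shows "b = c"
  using rel_unique[OF star_rel[OF assms(1,2,4,6)]] star_rel[OF assms(1,3,5,7)] assms(8) by auto

lemma star'_self [simp]: "a \<star>' a = \<zeta> a"
  unfolding star'_def by simp

lemma star'_ne [simp]: "a \<noteq> b \<Longrightarrow> a \<star>' b = a \<star> b"
  unfolding star'_def by simp

lemma star'_in: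
  assumes "a \<in> A" "b \<in> A" "s b = s a"
  shows "a \<star>' b \<in> A \<and> s (a \<star>' b) = t a"
  using star_in[of a b] zeta_in[of a] assms unfolding star'_def by auto

lemma star'_inj:
  assumes "a \<in> A" "b \<in> A" "c \<in> A" "s b = s a" "s c = s a" and "a \<star>' b = a \<star>' c"
  shows "b = c"
proof (rule ccontr)
  assume "b \<noteq> c"
  then consider "b = a" "c \<noteq> a" | "c = a" "b \<noteq> a" | "b \<noteq> a" "c \<noteq> a"
    by blast
  then show False
  proof cases
    case 1
    then have "a \<star> c = \<zeta> a"
      using assms(6) by simp
    then show False
      using star_ne_zeta[of a c] assms 1 by fastforce
  next
    case 2
    then have "a \<star> b = \<zeta> a"
      using assms(6) by simp
    then show False
      using star_ne_zeta[of a b] assms 2 by fastforce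
  next
    case 3
    then have "a \<star> b = a \<star> c"
      using assms(6) by simp
    then show False
      using star_inj[of a b c] assms 3 \<open>b \<noteq> c\<close> by fastforce
  qed
qed

lemma star'_surj:
  assumes "a \<in> A" "v \<in> A" "s v = t a"
  obtains b where "b \<in> A" "s b = s a" "v = a \<star>' b"
proof (cases "v = \<zeta> a")
  case True
  then show thesis using that assms by simp
next
  case False
  then obtain b w where "b \<noteq> a" and r: "rel R [a, v] [b, w]"
    using rel_if_ne_zeta assms by blast
  then have "b \<in> A" "s b = s a" "v = a \<star>' b"
    using relD[OF r] rel_imp_star[OF r] by auto
  then show thesis by (rule that)
qed

lemma rel_star':
  assumes "a \<in> A" "c \<in> A" "s c = s a" "c \<noteq> a"
  shows "rel R [a, a \<star>' c] [c, c \<star>' a]"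
  using star_rel[of a c] assms by (simp add: not_sym)

lemma bij_betw_star':
  assumes "a \<in> A"
  shows "bij_betw (\<lambda>b. a \<star>' b) (out_arrows A s (s a)) (out_arrows A s (t a))"
proof (rule bij_betw_imageI)
  show "inj_on (\<lambda>b. a \<star>' b) (out_arrows A s (s a))"
    using star'_inj[OF assms] by (auto simp: inj_on_def out_arrows_def)
  show "(\<lambda>b. a \<star>' b) ` out_arrows A s (s a) = out_arrows A s (t a)"
    using star'_in[OF assms] star'_surj[OF assms] by (auto simp: out_arrows_def) blast
qed

lemma rharp_star':
  assumes "a \<in> A" "c \<in> A" "s c = s a"
  shows "rharp A s t R a (a \<star>' c) = c"
  unfolding rharp_def
  using assms star'_inj[OF assms(1)] by (intro the_equality) (auto simp: out_arrows_def)

lemma sigma_star':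
  assumes "a \<in> A" "c \<in> A" "s c = s a"
  shows "\<sigma> (a, a \<star>' c) = (c, c \<star>' a)"
  unfolding sigma_def lharp_def using rharp_star'[OF assms] by simp

lemma t_star'_commute:
  assumes "a \<in> A" "c \<in> A" "s c = s a"
  shows "t (a \<star>' c) = t (c \<star>' a)"
proof (cases "a = c")
  case False
  then show ?thesis using relD(8)[OF star_rel[of a c]] assms by auto
qed simp

lemma composable_star'E:
  assumes "composable A s t p"
  obtains x c where "p = (x, x \<star>' c)" "x \<in> A" "c \<in> A" "s c = s x"
proof -
  obtain x y where "p = (x, y)" "x \<in> A" "y \<in> A" "t x = s y"
    using assms unfolding composable_def by (cases p) auto
  then show thesis
    using that star'_surj[of x y] by metis
qed

lemma composable_sigma:
  assumes "composable A s t p"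
  shows "composable A s t (\<sigma> p) \<and> s (fst (\<sigma> p)) = s (fst p) \<and> t (snd (\<sigma> p)) = t (snd p)"
proof -
  obtain x c where p: "p = (x, x \<star>' c)" "x \<in> A" "c \<in> A" "s c = s x"
    using assms by (rule composable_star'E)
  then have "\<sigma> p = (c, c \<star>' x)"
    using sigma_star' by simp
  moreover have "c \<star>' x \<in> A" "s (c \<star>' x) = t c" "t (c \<star>' x) = t (x \<star>' c)"
    using star'_in[of c x] t_star'_commute[of x c] p by auto
  ultimately show ?thesis
    using p unfolding composable_def by simp
qed

lemma involutive_on_sigma: "involutive_on A s t \<sigma>"
  unfolding involutive_on_def
proof (intro allI impI)
  fix p assume "composable A s t p"
  then obtain x c where "p = (x, x \<star>' c)" "x \<in> A" "c \<in> A" "s c = s x"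
    by (rule composable_star'E)
  then show "\<sigma> (\<sigma> p) = p"
    using sigma_star' by simp
qed

lemma bij_betw_rharp:
  assumes x: "x \<in> A"
  shows "bij_betw (\<lambda>y. fst (\<sigma> (x, y))) (out_arrows A s (t x)) (out_arrows A s (s x))"
proof (rule bij_betw_byWitness[where f' = "\<lambda>c. x \<star>' c"])
  show "\<forall>y \<in> out_arrows A s (t x). x \<star>' fst (\<sigma> (x, y)) = y"
  proof
    fix y assume "y \<in> out_arrows A s (t x)"
    then obtain c where "c \<in> A" "s c = s x" "y = x \<star>' c"
      using star'_surj[OF x] unfolding out_arrows_def by blast
    then show "x \<star>' fst (\<sigma> (x, y)) = y"
      using sigma_star' x by simp
  qed
  show "\<forall>c \<in> out_arrows A s (s x). fst (\<sigma> (x, x \<star>' c)) = c"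
    using sigma_star'[OF x] unfolding out_arrows_def by auto
  show "(\<lambda>y. fst (\<sigma> (x, y))) ` out_arrows A s (t x) \<subseteq> out_arrows A s (s x)"
  proof clarify
    fix y assume "y \<in> out_arrows A s (t x)"
    then have "composable A s t (x, y)"
      using x unfolding out_arrows_def composable_def by simp
    then show "fst (\<sigma> (x, y)) \<in> out_arrows A s (s x)"
      using composable_sigma unfolding out_arrows_def composable_def by auto
  qed
  show "(\<lambda>c. x \<star>' c) ` out_arrows A s (s x) \<subseteq> out_arrows A s (t x)"
    using star'_in[OF x] unfolding out_arrows_def by auto
qed

lemma pcong_R_if_structure_rel:
  assumes "(p, q) \<in> structure_rels A s t \<sigma>"
  shows "pcong A s t R p q"
proof -
  obtain xy where p: "p = [fst xy, snd xy]" "q = [fst (\<sigma> xy), snd (\<sigma> xy)]"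
    and "composable A s t xy"
    using assms unfolding structure_rels_def by auto
  then obtain x c where xy: "xy = (x, x \<star>' c)" and xc: "x \<in> A" "c \<in> A" "s c = s x"
    by (elim composable_star'E)
  then have q: "q = [c, c \<star>' x]"
    using p sigma_star' by simp
  show ?thesis
  proof (cases "c = x")
    case True
    have "is_path A s t p"
      using \<open>composable A s t xy\<close> p unfolding is_path_def composable_def by (auto simp: less_Suc_eq)
    then show ?thesis using True p q xy pcong.refl by simp
  next
    case False
    then have "rel R p q"
      using rel_star'[OF xc] p q xy by simp
    then show ?thesis
      unfolding rel_def by (metis pcong.base pcong.sym)
  qed
qed

lemma pcong_structure_rels_if_R:
  assumes "(p, q) \<in> R"
  shows "pcong A s t (structure_rels A s t \<sigma>) p q"
proof -
  obtain a v b w where r: "p = [a, v]" "q = [b, w]" "a \<in> A" "v \<in> A" "b \<in> A" "w \<in> A"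
    "t a = s v" "s a = s b"
    using assms by (elim R_memE)
  then have rel: "rel R [a, v] [b, w]"
    using assms unfolding rel_def by simp
  show ?thesis
  proof (cases "a = b")
    case True
    then have "p = q"
      using rel_same_head rel r by metis
    moreover have "is_path A s t p"
      using R_paths assms unfolding relations_on_paths_def by auto
    ultimately show ?thesis using pcong.refl by simp
  next
    case False
    then have "\<sigma> (a, v) = (b, w)"
      using rel_imp_star[OF rel] sigma_star'[of a b] r by simp
    then have "(p, q) \<in> structure_rels A s t \<sigma>"
      unfolding structure_rels_def composable_def using r by force
    then show ?thesis by (rule pcong.base)
  qed
qed

lemma pcong_structure_rels: "pcong A s t (structure_rels A s t \<sigma>) = pcong A s t R"
proof (intro ext iffI)
  fix p q
  show "pcong A s t (structure_rels A s t \<sigma>) p q \<Longrightarrow> pcong A s t R p q"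
    by (erule pcong_mono) (rule pcong_R_if_structure_rel)
  show "pcong A s t R p q \<Longrightarrow> pcong A s t (structure_rels A s t \<sigma>) p q"
    by (erule pcong_mono) (rule pcong_structure_rels_if_R)
qed

end

locale yb_presentation = left_complemented_presentation +
  assumes ii': "\<forall>a \<in> A. \<forall>b \<in> A. a \<noteq> b \<and> t a = t b \<longrightarrow> (\<exists>!vw. rel R [fst vw, a] [snd vw, b])"
    and iii': "\<forall>a \<in> A. \<exists>!z. zpred' A s t R a z"
    and v: "\<forall>a \<in> A. \<forall>b \<in> A. \<forall>c \<in> A. a \<noteq> b \<and> b \<noteq> c \<and> a \<noteq> c \<and> s a = s b \<and> s a = s c \<longrightarrow>
              star R (star R a b) (star R a c) = star R (star R b a) (star R b c)"
begin

abbreviation \<zeta>' where "\<zeta>' a \<equiv> THE z. zpred' A s t R a z"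

lemma zpred'_zeta': "a \<in> A \<Longrightarrow> zpred' A s t R a (\<zeta>' a)"
  using iii' by (blast intro: theI')

lemma zeta'_in: "a \<in> A \<Longrightarrow> \<zeta>' a \<in> A \<and> t (\<zeta>' a) = s a"
  using zpred'_zeta' unfolding zpred'_def by blast

lemma rel_zeta'_trivial: "a \<in> A \<Longrightarrow> rel R [\<zeta>' a, a] [w, b] \<Longrightarrow> b = a \<and> w = \<zeta>' a"
  using zpred'_zeta' unfolding zpred'_def by blast

lemma rel_if_ne_zeta':
  assumes "a \<in> A" "v \<in> A" "t v = s a" "v \<noteq> \<zeta>' a"
  obtains b w where "b \<noteq> a" "rel R [v, a] [w, b]"
  using zpred'_zeta'[of a] assms that unfolding zpred'_def by blast

lemma rel_same_last:
  assumes "rel R [v, a] [w, a]"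
  shows "v = w"
proof (cases "v = \<zeta>' a")
  case True
  then show ?thesis using rel_zeta'_trivial relD(2) assms by blast
next
  case False
  then obtain b w' where "b \<noteq> a" "rel R [v, a] [w', b]"
    using rel_if_ne_zeta' relD[OF assms] by metis
  then show ?thesis using rel_unique[OF assms] by blast
qed

lemma zeta'_zeta:
  assumes "a \<in> A"
  shows "\<zeta>' (\<zeta> a) = a"
proof (rule ccontr)
  assume "\<zeta>' (\<zeta> a) \<noteq> a"
  then obtain b w where "b \<noteq> \<zeta> a" "rel R [a, \<zeta> a] [w, b]"
    using rel_if_ne_zeta' zeta_in assms by metis
  then show False using rel_zeta_trivial assms by metis
qed

lemma zeta_zeta':
  assumes "a \<in> A"
  shows "\<zeta> (\<zeta>' a) = a"
proof (rule ccontr)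
  assume "\<zeta> (\<zeta>' a) \<noteq> a"
  then obtain b w where "b \<noteq> \<zeta>' a" "rel R [\<zeta>' a, a] [b, w]"
    using rel_if_ne_zeta zeta'_in assms by metis
  then show False using rel_zeta'_trivial assms by metis
qed

text \<open>The cycle law for \<open>c = a\<close>. With \<open>u = a \<star> b\<close> and \<open>u' = b \<star> a\<close>, write
  \<open>\<zeta> u' = u \<star> c\<close>; were \<open>c = a \<star> d\<close>, (v) would give \<open>u \<star> c = u' \<star> (b \<star> d) \<noteq> \<zeta> u'\<close>.
  Hence \<open>c = \<zeta> a\<close>.\<close>
lemma star_star'_zeta:
  assumes a: "a \<in> A" and b: "b \<in> A" and "a \<noteq> b" and "s a = s b"
  shows "(a \<star> b) \<star>' \<zeta> a = \<zeta> (b \<star> a)"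
proof -
  define u u' where "u = a \<star> b" and "u' = b \<star> a"
  have r: "rel R [a, u] [b, u']"
    unfolding u_def u'_def using star_rel assms by blast
  have u: "u \<in> A" "u' \<in> A" "t a = s u" "t b = s u'" "t u = t u'"
    using relD[OF r] by auto
  have "u \<noteq> u'"
    using rel_same_last r \<open>a \<noteq> b\<close> by blast
  then have "\<zeta> u' \<noteq> \<zeta> u"
    using zeta'_zeta[OF u(1)] zeta'_zeta[OF u(2)] by metis
  moreover have "\<zeta> u' \<in> A" "s (\<zeta> u') = t u"
    using zeta_in u by auto
  ultimately obtain c w where "c \<noteq> u" and r': "rel R [u, \<zeta> u'] [c, w]"
    using rel_if_ne_zeta[OF u(1)] by blast
  have c: "c \<in> A" "s c = t a" "\<zeta> u' = u \<star> c"
    using relD[OF r'] u(3) rel_imp_star(1)[OF r' not_sym[OF \<open>c \<noteq> u\<close>]] by auto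
  have "c = \<zeta> a"
  proof (rule ccontr)
    assume "c \<noteq> \<zeta> a"
    then obtain d w' where "d \<noteq> a" and r'': "rel R [a, c] [d, w']"
      using rel_if_ne_zeta[OF a] c by blast
    have d: "d \<in> A" "s d = s a" "c = a \<star> d"
      using relD[OF r''] rel_imp_star(1)[OF r'' not_sym[OF \<open>d \<noteq> a\<close>]] by auto
    have "d \<noteq> b"
      using \<open>c \<noteq> u\<close> d(3) unfolding u_def by blast
    have "s b = s d" "s b = s a"
      using d(2) \<open>s a = s b\<close> by simp_all
    have "a \<noteq> b \<and> b \<noteq> d \<and> a \<noteq> d \<and> s a = s b \<and> s a = s d"
      using \<open>a \<noteq> b\<close> \<open>d \<noteq> a\<close> \<open>d \<noteq> b\<close> \<open>s a = s b\<close> d(2) by auto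
    then have "(a \<star> b) \<star> (a \<star> d) = (b \<star> a) \<star> (b \<star> d)"
      using v a b d(1) by blast
    then have "u \<star> c = u' \<star> (b \<star> d)"
      by (simp only: u_def u'_def d(3))
    moreover have "b \<star> d \<noteq> u'"
      using star_inj[OF b d(1) a not_sym[OF \<open>d \<noteq> b\<close>] not_sym[OF \<open>a \<noteq> b\<close>] \<open>s b = s d\<close>
          \<open>s b = s a\<close>] \<open>d \<noteq> a\<close>
      unfolding u'_def by blast
    moreover have "b \<star> d \<in> A" "s (b \<star> d) = s u'"
      using star_in[OF b d(1) not_sym[OF \<open>d \<noteq> b\<close>] \<open>s b = s d\<close>] u(4) by simp_all
    ultimately have "u \<star> c \<noteq> \<zeta> u'"
      using star_ne_zeta[of u' "b \<star> d"] u(2) by (metis not_sym)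
    then show False
      using c(3) by simp
  qed
  moreover have "\<zeta> a \<noteq> u"
    using star_ne_zeta[OF assms] unfolding u_def by simp
  ultimately show ?thesis
    using c(3) unfolding u_def u'_def by simp
qed

lemma star'_cycle:
  assumes "a \<in> A" "b \<in> A" "c \<in> A" "s b = s a" "s c = s a"
  shows "(a \<star>' b) \<star>' (a \<star>' c) = (b \<star>' a) \<star>' (b \<star>' c)"
proof -
  consider "a = b" | "a \<noteq> b" "c = a" | "a \<noteq> b" "c = b" | "a \<noteq> b" "c \<noteq> a" "c \<noteq> b"
    by blast
  then show ?thesis
  proof cases
    case 1
    then show ?thesis by simp
  next
    case 2
    then show ?thesis
      using star_star'_zeta[of a b] not_sym[of a b] assms by simp
  next
    case 3
    then show ?thesis
      using star_star'_zeta[of b a] not_sym[of a b] assms by simp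
  next
    case 4
    then have "a \<star> b \<noteq> a \<star> c" "b \<star> a \<noteq> b \<star> c"
      using star_inj[of a b c] star_inj[of b a c] assms by (metis not_sym)+
    moreover have "(a \<star> b) \<star> (a \<star> c) = (b \<star> a) \<star> (b \<star> c)"
      using v 4 assms by (metis not_sym)
    ultimately show ?thesis
      using 4 by (simp add: not_sym)
  qed
qed

definition yb_triple :: "'a \<Rightarrow> 'a \<Rightarrow> 'a \<Rightarrow> 'a \<times> 'a \<times> 'a" where
  "yb_triple x c e = (x, x \<star>' c, (x \<star>' c) \<star>' (x \<star>' e))"

lemma composable_triple_eq_yb_triple:
  assumes "x \<in> A" "y \<in> A" "z \<in> A" "t x = s y" "t y = s z"
  obtains c e where "c \<in> A" "s c = s x" "e \<in> A" "s e = s x" "(x, y, z) = yb_triple x c e"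
proof -
  obtain c where c: "c \<in> A" "s c = s x" "y = x \<star>' c"
    using star'_surj[OF assms(1,2) assms(4)[symmetric]] by blast
  obtain d where d: "d \<in> A" "s d = t x" "z = y \<star>' d"
    using star'_surj[OF assms(2,3) assms(5)[symmetric]] assms(4) by metis
  obtain e where "e \<in> A" "s e = s x" "d = x \<star>' e"
    using star'_surj[OF assms(1) d(1,2)] by blast
  then show thesis
    using that c d unfolding yb_triple_def by simp
qed

lemma sig12_yb_triple:
  assumes "x \<in> A" "c \<in> A" "e \<in> A" "s c = s x" "s e = s x"
  shows "sig12 \<sigma> (yb_triple x c e) = yb_triple c x e"
  using assms sigma_star'[of x c] star'_cycle[of x c e] unfolding yb_triple_def sig12_def by simp

lemma sig23_yb_triple:
  assumes "x \<in> A" "c \<in> A" "e \<in> A" "s c = s x" "s e = s x"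
  shows "sig23 \<sigma> (yb_triple x c e) = yb_triple x e c"
  using assms sigma_star'[of "x \<star>' c" "x \<star>' e"] star'_in[of x c] star'_in[of x e]
  unfolding yb_triple_def sig23_def by simp

lemma yang_baxter_sigma:
  assumes "x \<in> A" "y \<in> A" "z \<in> A" "t x = s y" "t y = s z"
  shows "sig12 \<sigma> (sig23 \<sigma> (sig12 \<sigma> (x, y, z))) = sig23 \<sigma> (sig12 \<sigma> (sig23 \<sigma> (x, y, z)))"
proof -
  obtain c e where ce: "c \<in> A" "s c = s x" "e \<in> A" "s e = s x"
    and xyz: "(x, y, z) = yb_triple x c e"
    using assms by (rule composable_triple_eq_yb_triple)
  have "sig12 \<sigma> (sig23 \<sigma> (sig12 \<sigma> (yb_triple x c e))) = yb_triple e c x"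
    and "sig23 \<sigma> (sig12 \<sigma> (sig23 \<sigma> (yb_triple x c e))) = yb_triple e c x"
    using sig12_yb_triple sig23_yb_triple \<open>x \<in> A\<close> ce by simp_all
  then show ?thesis
    by (simp add: xyz)
qed

lemma qyb_map_sigma: "qyb_map A s t \<sigma>"
  unfolding qyb_map_def using composable_sigma yang_baxter_sigma by blast

lemma star'_commute_iff:
  assumes x: "x \<in> A" and c: "c \<in> A" "s c = s x"
  shows "c \<star>' x = x \<star>' c \<longleftrightarrow> c = x"
proof
  assume eq: "c \<star>' x = x \<star>' c"
  show "c = x"
  proof (rule ccontr)
    assume "c \<noteq> x"
    then have "rel R [x, x \<star>' c] [c, x \<star>' c]"
      using rel_star'[OF x c] eq by simp
    then show False
      using rel_same_last \<open>c \<noteq> x\<close> by metis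
  qed
qed simp

lemma inj_on_lharp:
  assumes y: "y \<in> A"
  shows "inj_on (\<lambda>x. snd (\<sigma> (x, y))) (in_arrows A t (s y))"
proof (rule inj_onI)
  fix x1 x2
  assume "x1 \<in> in_arrows A t (s y)" "x2 \<in> in_arrows A t (s y)"
    and eq: "snd (\<sigma> (x1, y)) = snd (\<sigma> (x2, y))"
  then have x1: "x1 \<in> A" "t x1 = s y" and x2: "x2 \<in> A" "t x2 = s y"
    unfolding in_arrows_def by auto
  obtain c1 where c1: "c1 \<in> A" "s c1 = s x1" "y = x1 \<star>' c1"
    using star'_surj x1 y by metis
  obtain c2 where c2: "c2 \<in> A" "s c2 = s x2" "y = x2 \<star>' c2"
    using star'_surj x2 y by metis
  define w where "w = c1 \<star>' x1"
  have "\<sigma> (x1, y) = (c1, w)" "\<sigma> (x2, y) = (c2, c2 \<star>' x2)"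
    using sigma_star'[of x1 c1] sigma_star'[of x2 c2] c1 c2 x1 x2 unfolding w_def by simp_all
  then have w2: "w = c2 \<star>' x2"
    using eq by simp
  show "x1 = x2"
  proof (cases "w = y")
    case True
    then have "c1 = x1" "c2 = x2"
      using star'_commute_iff[OF x1(1) c1(1,2)] star'_commute_iff[OF x2(1) c2(1,2)] c1(3) c2(3) w2
      unfolding w_def by simp_all
    then have "\<zeta> x1 = \<zeta> x2"
      using c1(3) c2(3) by simp
    then show ?thesis
      using zeta'_zeta[OF x1(1)] zeta'_zeta[OF x2(1)] by metis
  next
    case False
    then have "c1 \<noteq> x1" "c2 \<noteq> x2"
      using c1(3) c2(3) w2 unfolding w_def by auto
    have r1: "rel R [x1, y] [c1, w]"
      unfolding w_def c1(3) using rel_star' x1 c1 \<open>c1 \<noteq> x1\<close> by blast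
    have r2: "rel R [x2, y] [c2, w]"
      unfolding w2 c2(3) using rel_star' x2 c2 \<open>c2 \<noteq> x2\<close> by blast
    have "y \<noteq> w \<and> t y = t w"
      using False relD(8)[OF r1] by simp
    then have "\<exists>!vw. rel R [fst vw, y] [snd vw, w]"
      using ii' y relD(4)[OF r1] by blast
    then have "(THE vw. rel R [fst vw, y] [snd vw, w]) = (x1, c1)"
      and "(THE vw. rel R [fst vw, y] [snd vw, w]) = (x2, c2)"
      using the1_equality r1 r2 by fastforce+
    then show ?thesis by simp
  qed
qed

lemma lharp_surj:
  assumes y: "y \<in> A" and w: "w \<in> A" "t w = t y"
  shows "w \<in> (\<lambda>x. snd (\<sigma> (x, y))) ` in_arrows A t (s y)"
proof (cases "w = y")
  case True
  have z: "\<zeta>' y \<in> A" "t (\<zeta>' y) = s y"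
    using zeta'_in y by auto
  then have "\<sigma> (\<zeta>' y, y) = (\<zeta>' y, y)"
    using sigma_star'[of "\<zeta>' y" "\<zeta>' y"] zeta_zeta' y by simp
  then show ?thesis
    using True z unfolding in_arrows_def by force
next
  case False
  then have "y \<noteq> w \<and> t y = t w"
    using w(2) by simp
  then have "\<exists>vw. rel R [fst vw, y] [snd vw, w]"
    using ii' y w(1) by blast
  then obtain x c where r: "rel R [x, y] [c, w]"
    by auto
  with False have "x \<noteq> c"
    using rel_same_head by blast
  then have "\<sigma> (x, y) = (c, w)"
    using rel_imp_star[OF r] relD[OF r] sigma_star'[of x c] by simp
  then show ?thesis
    using relD[OF r] unfolding in_arrows_def by force
qed

lemma bij_betw_lharp:
  assumes y: "y \<in> A"
  shows "bij_betw (\<lambda>x. snd (\<sigma> (x, y))) (in_arrows A t (s y)) (in_arrows A t (t y))"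
  unfolding bij_betw_def
proof (intro conjI inj_on_lharp[OF y] equalityI subsetI)
  fix w assume "w \<in> (\<lambda>x. snd (\<sigma> (x, y))) ` in_arrows A t (s y)"
  then obtain x where "composable A s t (x, y)" "w = snd (\<sigma> (x, y))"
    using y unfolding in_arrows_def composable_def by auto
  then show "w \<in> in_arrows A t (t y)"
    using composable_sigma unfolding in_arrows_def composable_def by auto
next
  fix w assume "w \<in> in_arrows A t (t y)"
  then show "w \<in> (\<lambda>x. snd (\<sigma> (x, y))) ` in_arrows A t (s y)"
    using lharp_surj y unfolding in_arrows_def by blast
qed

lemma nondegenerate_sigma: "nondegenerate A s t \<sigma>"
  unfolding nondegenerate_def using bij_betw_rharp bij_betw_lharp by blast

end

theorem theorem6p3:
  fixes A :: "'a set" and s t :: "'a \<Rightarrow> 'v" and R :: "('a list \<times> 'a list) set"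
  assumes R_paths: "relations_on_paths A s t R"
    and i_form: "\<forall>(p, q) \<in> R. \<exists>a v b w. a \<in> A \<and> v \<in> A \<and> b \<in> A \<and> w \<in> A \<and> p = [a, v] \<and> q = [b, w]"
    and i_unique: "\<forall>p r1 r2. r1 \<in> R \<longrightarrow> r2 \<in> R \<longrightarrow> p \<in> {fst r1, snd r1} \<longrightarrow> p \<in> {fst r2, snd r2}
                     \<longrightarrow> r1 = r2 \<or> r1 = prod.swap r2"
    and ii: "\<forall>a \<in> A. \<forall>b \<in> A. a \<noteq> b \<and> s a = s b \<longrightarrow> (\<exists>!vw. rel R [a, fst vw] [b, snd vw])"
    and ii': "\<forall>a \<in> A. \<forall>b \<in> A. a \<noteq> b \<and> t a = t b \<longrightarrow> (\<exists>!vw. rel R [fst vw, a] [snd vw, b])"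
    and iii: "\<forall>a \<in> A. \<exists>!z. zpred A s t R a z"
    and iii': "\<forall>a \<in> A. \<exists>!z. zpred' A s t R a z"
    and v: "\<forall>a \<in> A. \<forall>b \<in> A. \<forall>c \<in> A. a \<noteq> b \<and> b \<noteq> c \<and> a \<noteq> c \<and> s a = s b \<and> s a = s c \<longrightarrow>
              star R (star R a b) (star R a c) = star R (star R b a) (star R b c)"
  shows "(\<forall>a \<in> A. bij_betw (star' A s t R a) (out_arrows A s (s a)) (out_arrows A s (t a)))
    \<and> qyb_map A s t (sigma A s t R)
    \<and> involutive_on A s t (sigma A s t R)
    \<and> nondegenerate A s t (sigma A s t R)
    \<and> pcong A s t (structure_rels A s t (sigma A s t R)) = pcong A s t R"
proof -
  interpret yb_presentation A s t R
    by unfold_locales (fact assms)+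
  show ?thesis
    using bij_betw_star' qyb_map_sigma involutive_on_sigma nondegenerate_sigma pcong_structure_rels
    by blast
qed

end
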